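(* The closure, in the norm of $C_0^2(\Omega,\mathcal{S}^{d\times d})$, of the set $$\{\phi\in C_c^\infty(\Omega,\mathcal{S}^{d\times d}):\ |\phi(x)|_r\le\alpha_0(x),\ |\operatorname{div}\phi(x)|_r\le\alpha_1(x)\ \forall x\in\Omega\}$$ equals the set $$\{\psi\in C_0^2(\Omega,\mathcal{S}^{d\times d}):\ |\psi(x)|_r\le\alpha_0(x),\ |\operatorname{div}\psi(x)|_r\le\alpha_1(x)\ \forall x\in\Omega\}.$$
   Context: Let $d\ge 2$ and let $\Omega\subset\mathbb{R}^d$ be a bounded open set with Lipschitz boundary. $\mathcal{S}^{d\times d}$ denotes the space of real symmetric $d\times d$ matrices. Fix $1\le r\le\infty$; $|\cdot|_r$ denotes the $\ell^r$ norm on $\mathbb{R}^d$ and the $\ell^r$ norm of the entries on $\mathcal{S}^{d\times d}$. For $\phi$ with values in $\mathcal{S}^{d\times d}$, $(\operatorname{div}\phi)_i=\sum_{j=1}^d\partial_{x_j}\phi_{ij}$. Let $\alpha_0,\alpha_1\in C(\overline\Omega)$ with $\alpha_0(x),\alpha_1(x)>\underline\alpha$ for all $x\in\Omega$, for some constant $\underline\alpha>0$. $C_0^2(\Omega,\mathcal{S}^{d\times d})$ denotes the closure of $C_c^\infty(\Omega,\mathcal{S}^{d\times d})$ with respect to the norm $\|\phi\|_{C^2}=\sum_{|\beta|\le 2}\sup_{x\in\Omega}|\partial^\beta\phi(x)|$. *)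

theory Defs
  imports "HOL-Analysis.Analysis" "HOL-Library.Multiset"
begin

definition pd :: "'n::finite \<Rightarrow> (real^'n \<Rightarrow> 'b::real_normed_vector) \<Rightarrow> real^'n \<Rightarrow> 'b" where
  "pd j f x = vector_derivative (\<lambda>t. f (x + t *\<^sub>R axis j 1)) (at 0)"

fun dpart :: "'n::finite list \<Rightarrow> (real^'n \<Rightarrow> 'b::real_normed_vector) \<Rightarrow> real^'n \<Rightarrow> 'b" where
  "dpart [] f = f"
| "dpart (j # js) f = pd j (dpart js f)"

text \<open>Multi-index derivative; a multi-index beta is a multiset of directions, |beta| = size beta.\<close>
definition pdm :: "'n::finite multiset \<Rightarrow> (real^'n \<Rightarrow> 'b::real_normed_vector) \<Rightarrow> real^'n \<Rightarrow> 'b" where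
  "pdm \<beta> f = dpart (SOME js. mset js = \<beta>) f"

definition Ck_on :: "nat \<Rightarrow> (real^'n::finite) set \<Rightarrow> (real^'n \<Rightarrow> 'b::real_normed_vector) \<Rightarrow> bool" where
  "Ck_on k \<Omega> f \<longleftrightarrow>
     (\<forall>js. length js \<le> k \<longrightarrow> continuous_on \<Omega> (dpart js f)) \<and>
     (\<forall>js j x. length js < k \<longrightarrow> x \<in> \<Omega> \<longrightarrow>
        (\<lambda>t. dpart js f (x + t *\<^sub>R axis j 1)) differentiable (at 0))"

definition smooth_on :: "(real^'n::finite) set \<Rightarrow> (real^'n \<Rightarrow> 'b::real_normed_vector) \<Rightarrow> bool" where
  "smooth_on \<Omega> f \<longleftrightarrow> (\<forall>k. Ck_on k \<Omega> f)"

definition sym_valued :: "(real^'n::finite) set \<Rightarrow> (real^'n \<Rightarrow> real^'n^'n) \<Rightarrow> bool" where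
  "sym_valued \<Omega> \<phi> \<longleftrightarrow> (\<forall>x\<in>\<Omega>. transpose (\<phi> x) = \<phi> x)"

definition Cc_inf :: "(real^'n::finite) set \<Rightarrow> (real^'n \<Rightarrow> real^'n^'n) \<Rightarrow> bool" where
  "Cc_inf \<Omega> \<phi> \<longleftrightarrow> smooth_on \<Omega> \<phi> \<and> sym_valued \<Omega> \<phi> \<and>
     compact (closure {x\<in>\<Omega>. \<phi> x \<noteq> 0}) \<and> closure {x\<in>\<Omega>. \<phi> x \<noteq> 0} \<subseteq> \<Omega>"

definition c2norm :: "(real^'n::finite) set \<Rightarrow> (real^'n \<Rightarrow> 'b::real_normed_vector) \<Rightarrow> ennreal" where
  "c2norm \<Omega> f = (\<Sum>\<beta>\<in>{\<beta>::'n multiset. size \<beta> \<le> 2}. SUP x\<in>\<Omega>. ennreal (norm (pdm \<beta> f x)))"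

definition C02 :: "(real^'n::finite) set \<Rightarrow> (real^'n \<Rightarrow> real^'n^'n) \<Rightarrow> bool" where
  "C02 \<Omega> \<psi> \<longleftrightarrow> Ck_on 2 \<Omega> \<psi> \<and> sym_valued \<Omega> \<psi> \<and>
     (\<exists>\<phi>. (\<forall>k. Cc_inf \<Omega> (\<phi> k)) \<and> ((\<lambda>k. c2norm \<Omega> (\<lambda>x. \<phi> k x - \<psi> x)) \<longlonglongrightarrow> 0))"

definition c2closure :: "(real^'n::finite) set \<Rightarrow> (real^'n \<Rightarrow> real^'n^'n) set \<Rightarrow> (real^'n \<Rightarrow> real^'n^'n) set" where
  "c2closure \<Omega> S = {\<psi>. C02 \<Omega> \<psi> \<and>
     (\<exists>\<phi>. (\<forall>k. \<phi> k \<in> S) \<and> ((\<lambda>k. c2norm \<Omega> (\<lambda>x. \<phi> k x - \<psi> x)) \<longlonglongrightarrow> 0))}"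

definition divm :: "(real^'n::finite \<Rightarrow> real^'n^'n) \<Rightarrow> real^'n \<Rightarrow> real^'n" where
  "divm \<phi> x = (\<chi> i. \<Sum>j\<in>UNIV. pd j \<phi> x $ i $ j)"

definition lr_vec :: "ereal \<Rightarrow> real^'n::finite \<Rightarrow> real" where
  "lr_vec r v = (if r = \<infinity> then Max (range (\<lambda>i. \<bar>v $ i\<bar>))
     else (\<Sum>i\<in>UNIV. \<bar>v $ i\<bar> powr real_of_ereal r) powr (1 / real_of_ereal r))"

definition lr_mat :: "ereal \<Rightarrow> real^'n::finite^'n \<Rightarrow> real" where
  "lr_mat r A = (if r = \<infinity> then Max (range (\<lambda>(i,j). \<bar>A $ i $ j\<bar>))
     else (\<Sum>(i,j)\<in>UNIV. \<bar>A $ i $ j\<bar> powr real_of_ereal r) powr (1 / real_of_ereal r))"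

text \<open>Lipschitz boundary (strong Lipschitz / local graph condition, coordinate free):
  near each boundary point, after choosing a unit direction e, Omega is the region
  below the graph of a Lipschitz function g of the coordinates orthogonal to e.\<close>
definition lipschitz_boundary :: "(real^'n::finite) set \<Rightarrow> bool" where
  "lipschitz_boundary \<Omega> \<longleftrightarrow> (\<forall>x\<in>frontier \<Omega>. \<exists>\<rho>>0. \<exists>e g L.
     norm e = 1 \<and> L-lipschitz_on UNIV g \<and> (\<forall>y t. g (y + t *\<^sub>R e) = g y) \<and>
     \<Omega> \<inter> ball x \<rho> = {y\<in>ball x \<rho>. y \<bullet> e < g y})"

end

theory Submission
  imports Defs
begin

text \<open>
  Convergence in the C^2 norm implies uniform convergence of the functions and of their
  divergences, and the l^r norms are continuous, so the pointwise constraints pass to C^2 limits.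
  Conversely, let \<open>\<psi>\<close> satisfy the constraints and let \<open>\<phi>\<^sub>k \<in> C\<^sub>c\<^sup>\<infinity>\<close> converge to \<open>\<psi>\<close> in C^2.
  The values and divergences of \<open>\<phi>\<^sub>k\<close> eventually lie in a fixed ball, on which the l^r norms are
  uniformly continuous, so for large k they exceed the weights by less than \<open>e \<alpha>_low\<close>, uniformly
  in x. As the weights are bounded below by \<open>\<alpha>_low\<close>, the shrunk functions \<open>(1 - e) \<phi>\<^sub>k\<close> satisfy
  the constraints exactly, and they approximate \<open>\<psi>\<close> in C^2 as \<open>e \<rightarrow> 0\<close> and \<open>k \<rightarrow> \<infinity>\<close>.
\<close>

section \<open>Partial derivatives and divergence\<close>

lemma has_vector_derivative_line_cong_open:
  fixes F G :: "'a::real_normed_vector \<Rightarrow> 'b::real_normed_vector"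
  assumes "open U" "x \<in> U" "\<forall>y\<in>U. F y = G y"
  shows "((\<lambda>t. F (x + t *\<^sub>R v)) has_vector_derivative D) (at 0) \<longleftrightarrow>
         ((\<lambda>t. G (x + t *\<^sub>R v)) has_vector_derivative D) (at 0)"
proof -
  have line: "open {t::real. x + t *\<^sub>R v \<in> U}"
    using open_vimage[OF assms(1), of "\<lambda>t::real. x + t *\<^sub>R v"] by (simp add: vimage_def continuous_intros)
  show ?thesis
  proof
    assume "((\<lambda>t. F (x + t *\<^sub>R v)) has_vector_derivative D) (at 0)"
    then show "((\<lambda>t. G (x + t *\<^sub>R v)) has_vector_derivative D) (at 0)"
      by (rule has_vector_derivative_transform_within_open[OF _ line]) (use assms in auto)
  next
    assume "((\<lambda>t. G (x + t *\<^sub>R v)) has_vector_derivative D) (at 0)"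
    then show "((\<lambda>t. F (x + t *\<^sub>R v)) has_vector_derivative D) (at 0)"
      by (rule has_vector_derivative_transform_within_open[OF _ line]) (use assms in auto)
  qed
qed

lemma pd_cong_open:
  assumes "open U" "x \<in> U" "\<forall>y\<in>U. F y = G y"
  shows "pd j F x = pd j G x"
  unfolding pd_def vector_derivative_def using has_vector_derivative_line_cong_open[OF assms] by simp

lemma differentiable_line_cong_open:
  fixes F G :: "'a::real_normed_vector \<Rightarrow> 'b::real_normed_vector"
  assumes "open U" "x \<in> U" "\<forall>y\<in>U. F y = G y"
    and "(\<lambda>t. F (x + t *\<^sub>R v)) differentiable (at 0)"
  shows "(\<lambda>t. G (x + t *\<^sub>R v)) differentiable (at 0)"
  using has_vector_derivative_line_cong_open[OF assms(1-3)] assms(4)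
  by (metis vector_derivative_works differentiableI_vector)

lemma pd_linear:
  fixes F G :: "real^'n::finite \<Rightarrow> 'b::real_normed_vector"
  assumes "(\<lambda>t. F (x + t *\<^sub>R axis j 1)) differentiable (at 0)"
    and "(\<lambda>t. G (x + t *\<^sub>R axis j 1)) differentiable (at 0)"
  shows "pd j (\<lambda>y. a *\<^sub>R F y + b *\<^sub>R G y) x = a *\<^sub>R pd j F x + b *\<^sub>R pd j G x"
  unfolding pd_def using assms unfolding vector_derivative_works
  by (intro vector_derivative_at) (auto intro!: derivative_eq_intros)

lemma Ck_on_mono: "Ck_on k \<Omega> f \<Longrightarrow> j \<le> k \<Longrightarrow> Ck_on j \<Omega> f"
  unfolding Ck_on_def by auto

lemma Ck_on_pd_linear:
  fixes f g :: "real^'n::finite \<Rightarrow> 'b::real_normed_vector"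
  assumes "Ck_on 1 \<Omega> f" "Ck_on 1 \<Omega> g" "x \<in> \<Omega>"
  shows "pd j (\<lambda>y. a *\<^sub>R f y + b *\<^sub>R g y) x = a *\<^sub>R pd j f x + b *\<^sub>R pd j g x"
  using assms unfolding Ck_on_def by (intro pd_linear) (metis dpart.simps(1) list.size(3) zero_less_one)+

lemma dpart_linear:
  fixes f g :: "real^'n::finite \<Rightarrow> 'b::real_normed_vector"
  assumes "open \<Omega>" "Ck_on k \<Omega> f" "Ck_on k \<Omega> g" "length js \<le> k" "x \<in> \<Omega>"
  shows "dpart js (\<lambda>y. a *\<^sub>R f y + b *\<^sub>R g y) x = a *\<^sub>R dpart js f x + b *\<^sub>R dpart js g x"
  using assms(4,5)
proof (induction js arbitrary: x)
  case Nil
  then show ?case by simp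
next
  case (Cons j js)
  then have "\<forall>y\<in>\<Omega>. dpart js (\<lambda>y. a *\<^sub>R f y + b *\<^sub>R g y) y
      = a *\<^sub>R dpart js f y + b *\<^sub>R dpart js g y"
    by simp
  then have "dpart (j # js) (\<lambda>y. a *\<^sub>R f y + b *\<^sub>R g y) x
      = pd j (\<lambda>y. a *\<^sub>R dpart js f y + b *\<^sub>R dpart js g y) x"
    using pd_cong_open[OF assms(1) Cons.prems(2)] by simp
  also have "\<dots> = a *\<^sub>R dpart (j # js) f x + b *\<^sub>R dpart (j # js) g x"
    using assms(2,3) Cons.prems unfolding Ck_on_def by (simp add: pd_linear)
  finally show ?case .
qed

lemma Ck_on_linear:
  fixes f g :: "real^'n::finite \<Rightarrow> 'b::real_normed_vector"
  assumes "open \<Omega>" "Ck_on k \<Omega> f" "Ck_on k \<Omega> g"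
  shows "Ck_on k \<Omega> (\<lambda>y. a *\<^sub>R f y + b *\<^sub>R g y)"
  unfolding Ck_on_def
proof (intro conjI allI impI)
  fix js :: "'n list" assume js: "length js \<le> k"
  have "continuous_on \<Omega> (\<lambda>y. a *\<^sub>R dpart js f y + b *\<^sub>R dpart js g y)"
    using assms js unfolding Ck_on_def by (intro continuous_intros) auto
  then show "continuous_on \<Omega> (dpart js (\<lambda>y. a *\<^sub>R f y + b *\<^sub>R g y))"
    using dpart_linear[OF assms js] by (metis (no_types, lifting) continuous_on_cong)
next
  fix js :: "'n list" and j x assume js: "length js < k" and x: "x \<in> \<Omega>"
  have eq: "\<forall>y\<in>\<Omega>. a *\<^sub>R dpart js f y + b *\<^sub>R dpart js g y = dpart js (\<lambda>y. a *\<^sub>R f y + b *\<^sub>R g y) y"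
    using dpart_linear[OF assms] js by simp
  have "(\<lambda>t. a *\<^sub>R dpart js f (x + t *\<^sub>R axis j 1) + b *\<^sub>R dpart js g (x + t *\<^sub>R axis j 1))
      differentiable (at 0)"
    using assms js x unfolding Ck_on_def by (intro derivative_intros) auto
  then show "(\<lambda>t. dpart js (\<lambda>y. a *\<^sub>R f y + b *\<^sub>R g y) (x + t *\<^sub>R axis j 1)) differentiable (at 0)"
    by (rule differentiable_line_cong_open[OF assms(1) x eq])
qed

lemma mset_pdm_list: "mset (SOME js. mset js = \<beta>) = \<beta>"
  by (rule someI_ex) (rule ex_mset)

lemma pdm_linear:
  fixes f g :: "real^'n::finite \<Rightarrow> 'b::real_normed_vector"
  assumes "open \<Omega>" "Ck_on k \<Omega> f" "Ck_on k \<Omega> g" "size \<beta> \<le> k" "x \<in> \<Omega>"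
  shows "pdm \<beta> (\<lambda>y. a *\<^sub>R f y + b *\<^sub>R g y) x = a *\<^sub>R pdm \<beta> f x + b *\<^sub>R pdm \<beta> g x"
proof -
  have "length (SOME js. mset js = \<beta>) \<le> k"
    using assms(4) mset_pdm_list[of \<beta>] by (metis size_mset)
  then show ?thesis unfolding pdm_def using dpart_linear[OF assms(1-3) _ assms(5)] by blast
qed

lemma pdm_empty [simp]: "pdm {#} f = f"
  using mset_pdm_list[of "{#}"] unfolding pdm_def by simp

lemma pdm_single [simp]: "pdm {#j#} f = pd j f"
proof -
  have "(SOME js. mset js = {#j#}) = [j]"
    using mset_pdm_list[of "{#j#}"] by simp
  then show ?thesis unfolding pdm_def by simp
qed

lemma divm_linear:
  fixes f g :: "real^'n::finite \<Rightarrow> real^'n^'n"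
  assumes "Ck_on 1 \<Omega> f" "Ck_on 1 \<Omega> g" "x \<in> \<Omega>"
  shows "divm (\<lambda>y. a *\<^sub>R f y + b *\<^sub>R g y) x = a *\<^sub>R divm f x + b *\<^sub>R divm g x"
  unfolding divm_def using Ck_on_pd_linear[OF assms]
  by (simp add: vec_eq_iff sum.distrib sum_distrib_left)

lemma divm_diff:
  fixes f g :: "real^'n::finite \<Rightarrow> real^'n^'n"
  assumes "Ck_on 1 \<Omega> f" "Ck_on 1 \<Omega> g" "x \<in> \<Omega>"
  shows "divm (\<lambda>y. f y - g y) x = divm f x - divm g x"
  using divm_linear[OF assms, of 1 "-1"] by simp

lemma divm_scaleR:
  fixes f :: "real^'n::finite \<Rightarrow> real^'n^'n"
  assumes "Ck_on 1 \<Omega> f" "x \<in> \<Omega>"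
  shows "divm (\<lambda>y. a *\<^sub>R f y) x = a *\<^sub>R divm f x"
  using divm_linear[OF assms(1) assms(1) assms(2), of a 0] by simp

lemma norm_divm_le:
  fixes f :: "real^'n::finite \<Rightarrow> real^'n^'n"
  assumes "\<And>j. norm (pd j f x) \<le> t"
  shows "norm (divm f x) \<le> real CARD('n) ^ 2 * t"
proof -
  have entry: "\<bar>pd j f x $ i $ j\<bar> \<le> t" for i j
    using component_le_norm_cart[of "pd j f x $ i" j] Finite_Cartesian_Product.norm_nth_le[of "pd j f x" i]
      assms[of j] by linarith
  have "norm (divm f x) \<le> (\<Sum>i\<in>UNIV. \<bar>divm f x $ i\<bar>)"
    by (rule norm_le_l1_cart)
  also have "\<dots> \<le> (\<Sum>i\<in>(UNIV::'n set). \<Sum>j\<in>(UNIV::'n set). t)"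
  proof (rule sum_mono)
    fix i
    have "\<bar>\<Sum>j\<in>UNIV. pd j f x $ i $ j\<bar> \<le> (\<Sum>j\<in>UNIV. \<bar>pd j f x $ i $ j\<bar>)"
      by (rule sum_abs)
    also have "\<dots> \<le> (\<Sum>j\<in>(UNIV::'n set). t)"
      using entry by (rule sum_mono)
    finally show "\<bar>divm f x $ i\<bar> \<le> (\<Sum>j\<in>(UNIV::'n set). t)"
      unfolding divm_def by simp
  qed
  finally show ?thesis by (simp add: power2_eq_square)
qed

section \<open>The C^2 norm\<close>

lemma finite_multisets_size_le: "finite {\<beta> :: 'a::finite multiset. size \<beta> \<le> k}"
proof -
  have "{\<beta> :: 'a multiset. size \<beta> \<le> k} = (\<Union>n\<le>k. multisets_of_size UNIV n)"
    by (auto simp: multisets_of_size_def)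
  then show ?thesis by auto
qed

lemma norm_pdm_le_c2norm:
  assumes "size \<beta> \<le> 2" "x \<in> \<Omega>"
  shows "ennreal (norm (pdm \<beta> f x)) \<le> c2norm \<Omega> f"
proof -
  have "ennreal (norm (pdm \<beta> f x)) \<le> (SUP x\<in>\<Omega>. ennreal (norm (pdm \<beta> f x)))"
    using assms(2) by (rule SUP_upper)
  also have "\<dots> \<le> c2norm \<Omega> f" unfolding c2norm_def
    by (rule member_le_sum[where f = "\<lambda>\<beta>. SUP x\<in>\<Omega>. ennreal (norm (pdm \<beta> f x))"])
       (use assms finite_multisets_size_le in auto)
  finally show ?thesis .
qed

lemma norm_pdm_le_of_c2norm_le:
  assumes "c2norm \<Omega> f \<le> ennreal t" "0 \<le> t" "size \<beta> \<le> 2" "x \<in> \<Omega>"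
  shows "norm (pdm \<beta> f x) \<le> t"
  using order.trans[OF norm_pdm_le_c2norm[OF assms(3,4)] assms(1)] assms(2) by simp

lemma c2norm_le_pointwise:
  fixes h f g :: "real^'n::finite \<Rightarrow> 'b::real_normed_vector"
  assumes "0 \<le> c"
    and "\<And>\<beta> x. size \<beta> \<le> 2 \<Longrightarrow> x \<in> \<Omega> \<Longrightarrow>
           norm (pdm \<beta> h x) \<le> norm (pdm \<beta> f x) + c * norm (pdm \<beta> g x)"
  shows "c2norm \<Omega> h \<le> c2norm \<Omega> f + ennreal c * c2norm \<Omega> g"
proof -
  have "(SUP x\<in>\<Omega>. ennreal (norm (pdm \<beta> h x))) \<le>
      (SUP x\<in>\<Omega>. ennreal (norm (pdm \<beta> f x))) + ennreal c * (SUP x\<in>\<Omega>. ennreal (norm (pdm \<beta> g x)))"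
    if b: "size \<beta> \<le> 2" for \<beta>
  proof (rule SUP_least)
    fix x assume x: "x \<in> \<Omega>"
    have "ennreal (norm (pdm \<beta> h x)) \<le> ennreal (norm (pdm \<beta> f x)) + ennreal c * ennreal (norm (pdm \<beta> g x))"
      using assms(2)[OF b x] assms(1) by (simp add: ennreal_leI flip: ennreal_plus ennreal_mult)
    also have "\<dots> \<le> (SUP x\<in>\<Omega>. ennreal (norm (pdm \<beta> f x))) + ennreal c * (SUP x\<in>\<Omega>. ennreal (norm (pdm \<beta> g x)))"
      using x by (intro add_mono mult_left_mono SUP_upper) auto
    finally show "ennreal (norm (pdm \<beta> h x)) \<le> \<dots>" .
  qed
  then show ?thesis unfolding c2norm_def sum_distrib_left sum.distrib[symmetric]
    by (intro sum_mono) auto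
qed

lemma Cc_inf_Ck_on: "Cc_inf \<Omega> \<phi> \<Longrightarrow> Ck_on k \<Omega> \<phi>"
  unfolding Cc_inf_def smooth_on_def by auto

lemma Cc_inf_bounded_dpart:
  assumes "open \<Omega>" "Cc_inf \<Omega> \<phi>"
  shows "bounded (dpart js \<phi> ` \<Omega>)"
proof -
  define K where "K = closure {x\<in>\<Omega>. \<phi> x \<noteq> 0}"
  have K: "compact K" "K \<subseteq> \<Omega>" using assms(2) unfolding Cc_inf_def K_def by auto
  have "continuous_on \<Omega> (dpart js \<phi>)"
    using Cc_inf_Ck_on[OF assms(2), of "length js"] unfolding Ck_on_def by auto
  then have bounded_on_K: "bounded (dpart js \<phi> ` K)"
    using K by (metis compact_continuous_image compact_imp_bounded continuous_on_subset)
  have "dpart js' \<phi> y = 0" if "y \<in> \<Omega> - K" for js' y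
    using that
  proof (induction js' arbitrary: y)
    case Nil
    then show ?case unfolding K_def using closure_subset[of "{x\<in>\<Omega>. \<phi> x \<noteq> 0}"] by auto
  next
    case (Cons j js')
    have "open (\<Omega> - K)" using assms(1) K_def by auto
    moreover have "\<forall>z\<in>\<Omega> - K. dpart js' \<phi> z = 0" using Cons.IH by blast
    ultimately have "dpart (j # js') \<phi> y = pd j (\<lambda>_. 0) y"
      using pd_cong_open[OF _ Cons.prems] by simp
    then show ?case unfolding pd_def by (simp add: vector_derivative_at)
  qed
  then have "dpart js \<phi> ` \<Omega> \<subseteq> insert 0 (dpart js \<phi> ` K)" by auto
  then show ?thesis using bounded_on_K bounded_subset bounded_insert by metis
qed

lemma Cc_inf_c2norm_finite:
  fixes \<phi> :: "real^'n::finite \<Rightarrow> real^'n^'n"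
  assumes "open \<Omega>" "Cc_inf \<Omega> \<phi>"
  shows "c2norm \<Omega> \<phi> < top"
proof -
  have "(SUP x\<in>\<Omega>. ennreal (norm (pdm \<beta> \<phi> x))) < top" for \<beta>
  proof -
    obtain B where B: "\<forall>y \<in> pdm \<beta> \<phi> ` \<Omega>. norm y \<le> B"
      using Cc_inf_bounded_dpart[OF assms] unfolding bounded_iff pdm_def by blast
    then have "(SUP x\<in>\<Omega>. ennreal (norm (pdm \<beta> \<phi> x))) \<le> ennreal B"
      by (intro SUP_least) (auto intro: ennreal_leI)
    then show ?thesis using le_less_trans by fastforce
  qed
  then show ?thesis
    unfolding c2norm_def using finite_multisets_size_le by (subst ennreal_sum_less_top) auto
qed

lemma Cc_inf_scaleR:
  assumes "open \<Omega>" "Cc_inf \<Omega> \<phi>" "c \<noteq> 0"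
  shows "Cc_inf \<Omega> (\<lambda>y. c *\<^sub>R \<phi> y)"
proof -
  have "Ck_on k \<Omega> (\<lambda>y. c *\<^sub>R \<phi> y)" for k
    using Ck_on_linear[OF assms(1) Cc_inf_Ck_on Cc_inf_Ck_on, OF assms(2) assms(2), of k c 0] by simp
  moreover have "{x\<in>\<Omega>. c *\<^sub>R \<phi> x \<noteq> 0} = {x\<in>\<Omega>. \<phi> x \<noteq> 0}" using assms(3) by auto
  ultimately show ?thesis using assms(2) unfolding Cc_inf_def smooth_on_def sym_valued_def
    by (simp add: transpose_scalar)
qed

lemma C02_c2norm_finite:
  fixes \<psi> :: "real^'n::finite \<Rightarrow> real^'n^'n"
  assumes "open \<Omega>" "C02 \<Omega> \<psi>"
  shows "c2norm \<Omega> \<psi> < top"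
proof -
  obtain \<phi> where \<phi>: "\<And>k. Cc_inf \<Omega> (\<phi> k)" and lim: "(\<lambda>k. c2norm \<Omega> (\<lambda>x. \<phi> k x - \<psi> x)) \<longlonglongrightarrow> 0"
    using assms(2) unfolding C02_def by auto
  obtain k where k: "c2norm \<Omega> (\<lambda>x. \<phi> k x - \<psi> x) < 1"
    using order_tendstoD(2)[OF lim, of 1] by (auto simp: eventually_sequentially)
  have "c2norm \<Omega> \<psi> \<le> c2norm \<Omega> (\<lambda>x. \<phi> k x - \<psi> x) + ennreal 1 * c2norm \<Omega> (\<phi> k)"
  proof (rule c2norm_le_pointwise)
    fix \<beta> :: "'n multiset" and x assume "size \<beta> \<le> 2" "x \<in> \<Omega>"
    moreover have "Ck_on 2 \<Omega> \<psi>" using assms(2) unfolding C02_def by simp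
    ultimately have "pdm \<beta> (\<lambda>x. \<phi> k x - \<psi> x) x = pdm \<beta> (\<phi> k) x - pdm \<beta> \<psi> x"
      using pdm_linear[OF assms(1) Cc_inf_Ck_on[OF \<phi>], where a = 1 and b = "-1"] by simp
    then show "norm (pdm \<beta> \<psi> x) \<le> norm (pdm \<beta> (\<lambda>x. \<phi> k x - \<psi> x) x) + 1 * norm (pdm \<beta> (\<phi> k) x)"
      using norm_triangle_sub[of "pdm \<beta> \<psi> x" "pdm \<beta> (\<phi> k) x"]
      by (simp add: norm_minus_commute add.commute)
  qed simp
  moreover have "c2norm \<Omega> (\<lambda>x. \<phi> k x - \<psi> x) < top"
    using k top.not_eq_extremum by fastforce
  ultimately show ?thesis
    using Cc_inf_c2norm_finite[OF assms(1) \<phi>] by (simp add: le_less_trans)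
qed

lemma norm_shrink_diff_le:
  fixes a b :: "'a::real_normed_vector"
  assumes "0 \<le> e" "e \<le> 1"
  shows "norm ((1 - e) *\<^sub>R a - b) \<le> norm (a - b) + e * norm b"
proof -
  have "norm ((1 - e) *\<^sub>R a - b) = norm ((1 - e) *\<^sub>R (a - b) - e *\<^sub>R b)"
    by (simp add: algebra_simps)
  also have "\<dots> \<le> (1 - e) * norm (a - b) + e * norm b"
    using norm_triangle_ineq4[of "(1 - e) *\<^sub>R (a - b)" "e *\<^sub>R b"] assms by simp
  also have "\<dots> \<le> norm (a - b) + e * norm b"
    using assms by (simp add: mult_left_le_one_le)
  finally show ?thesis .
qed

lemma c2norm_shrink_diff_le:
  fixes \<phi> \<psi> :: "real^'n::finite \<Rightarrow> 'b::real_normed_vector"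
  assumes "open \<Omega>" "Ck_on 2 \<Omega> \<phi>" "Ck_on 2 \<Omega> \<psi>" "0 \<le> e" "e \<le> 1"
  shows "c2norm \<Omega> (\<lambda>x. (1 - e) *\<^sub>R \<phi> x - \<psi> x)
           \<le> c2norm \<Omega> (\<lambda>x. \<phi> x - \<psi> x) + ennreal e * c2norm \<Omega> \<psi>"
proof (rule c2norm_le_pointwise[OF assms(4)])
  fix \<beta> :: "'n multiset" and x assume "size \<beta> \<le> 2" "x \<in> \<Omega>"
  note lin = pdm_linear[OF assms(1-3) this]
  show "norm (pdm \<beta> (\<lambda>x. (1 - e) *\<^sub>R \<phi> x - \<psi> x) x)
      \<le> norm (pdm \<beta> (\<lambda>x. \<phi> x - \<psi> x) x) + e * norm (pdm \<beta> \<psi> x)"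
    using lin[of "1 - e" "-1"] lin[of 1 "-1"] norm_shrink_diff_le[OF assms(4,5)] by simp
qed

section \<open>The l^r norms\<close>

lemma continuous_on_Max_image:
  fixes f :: "'i \<Rightarrow> 'a::topological_space \<Rightarrow> real"
  assumes "finite I" "I \<noteq> {}" "\<And>i. i \<in> I \<Longrightarrow> continuous_on S (f i)"
  shows "continuous_on S (\<lambda>x. Max ((\<lambda>i. f i x) ` I))"
  using assms
proof (induction I rule: finite_ne_induct)
  case (singleton i)
  then show ?case by simp
next
  case (insert i I)
  then have "continuous_on S (\<lambda>x. max (f i x) (Max ((\<lambda>i. f i x) ` I)))"
    by (intro continuous_on_max) auto
  then show ?case using insert by simp
qed

lemma real_of_ereal_ge_1: "1 \<le> r \<Longrightarrow> r \<noteq> \<infinity> \<Longrightarrow> 1 \<le> real_of_ereal r"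
  by (cases r) auto

lemma lr_vec_continuous:
  assumes "1 \<le> r"
  shows "continuous_on UNIV (lr_vec r :: real^'n::finite \<Rightarrow> real)"
proof (cases "r = \<infinity>")
  case True
  have "continuous_on UNIV (\<lambda>v::real^'n. Max ((\<lambda>i. \<bar>v $ i\<bar>) ` UNIV))"
    by (intro continuous_on_Max_image continuous_intros) auto
  then show ?thesis unfolding lr_vec_def[abs_def] using True by simp
next
  case False
  then have "1 \<le> real_of_ereal r" by (rule real_of_ereal_ge_1[OF assms])
  then have "continuous_on UNIV (\<lambda>v::real^'n.
      (\<Sum>i\<in>UNIV. \<bar>v $ i\<bar> powr real_of_ereal r) powr (1 / real_of_ereal r))"
    by (intro continuous_on_powr' continuous_intros) (auto simp: sum_nonneg)
  then show ?thesis unfolding lr_vec_def[abs_def] using False by simp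
qed

lemma lr_mat_continuous:
  assumes "1 \<le> r"
  shows "continuous_on UNIV (lr_mat r :: real^'n::finite^'n \<Rightarrow> real)"
proof (cases "r = \<infinity>")
  case True
  have "continuous_on UNIV (\<lambda>A::real^'n^'n. Max ((\<lambda>q. \<bar>A $ fst q $ snd q\<bar>) ` UNIV))"
    by (intro continuous_on_Max_image continuous_intros) auto
  then show ?thesis unfolding lr_mat_def[abs_def] using True by (simp add: case_prod_beta)
next
  case False
  then have p: "1 \<le> real_of_ereal r" by (rule real_of_ereal_ge_1[OF assms])
  have "continuous_on UNIV (\<lambda>A::real^'n^'n. \<bar>A $ fst q $ snd q\<bar> powr real_of_ereal r)" for q
    using p by (intro continuous_on_powr' continuous_intros) auto
  then have "continuous_on UNIV (\<lambda>A::real^'n^'n.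
      (\<Sum>q\<in>UNIV. \<bar>A $ fst q $ snd q\<bar> powr real_of_ereal r) powr (1 / real_of_ereal r))"
    using p by (intro continuous_on_powr' continuous_on_sum continuous_intros) (auto simp: sum_nonneg)
  then show ?thesis unfolding lr_mat_def[abs_def] using False by (simp add: case_prod_beta)
qed

lemma root_sum_powr_mult:
  fixes a :: "'i \<Rightarrow> real"
  assumes "1 \<le> p" "0 \<le> c" "\<And>i. 0 \<le> a i"
  shows "(\<Sum>i\<in>I. (c * a i) powr p) powr (1 / p) = c * (\<Sum>i\<in>I. a i powr p) powr (1 / p)"
proof -
  have "(\<Sum>i\<in>I. (c * a i) powr p) = c powr p * (\<Sum>i\<in>I. a i powr p)"
    using assms by (simp add: powr_mult sum_distrib_left)
  then show ?thesis
    using assms by (simp add: powr_mult sum_nonneg powr_powr)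
qed

lemma Max_image_mult_left:
  fixes f :: "'i \<Rightarrow> real"
  assumes "finite I" "I \<noteq> {}" "0 \<le> c"
  shows "Max ((\<lambda>i. c * f i) ` I) = c * Max (f ` I)"
  using mono_Max_commute[of "(*) c" "f ` I"] assms
  by (simp add: image_image mono_def mult_left_mono)

lemma lr_vec_scaleR:
  assumes "1 \<le> r" "0 \<le> c"
  shows "lr_vec r (c *\<^sub>R (v::real^'n::finite)) = c * lr_vec r v"
  unfolding lr_vec_def using assms real_of_ereal_ge_1[OF assms(1)]
    Max_image_mult_left[of UNIV c "\<lambda>i. \<bar>v $ i\<bar>"] root_sum_powr_mult[of "real_of_ereal r" c "\<lambda>i. \<bar>v $ i\<bar>"]
  by (simp add: abs_mult image_image)

lemma lr_mat_scaleR: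
  assumes "1 \<le> r" "0 \<le> c"
  shows "lr_mat r (c *\<^sub>R (A::real^'n::finite^'n)) = c * lr_mat r A"
  unfolding lr_mat_def using assms real_of_ereal_ge_1[OF assms(1)]
    Max_image_mult_left[of UNIV c "\<lambda>(i,j). \<bar>A $ i $ j\<bar>"]
    root_sum_powr_mult[of "real_of_ereal r" c "\<lambda>(i,j). \<bar>A $ i $ j\<bar>"]
  by (simp add: abs_mult image_image case_prod_beta)

section \<open>C^2 convergence and the pointwise constraints\<close>

lemma c2norm_tendsto_imp_uniform_limit:
  fixes \<phi> :: "nat \<Rightarrow> real^'n::finite \<Rightarrow> real^'n^'n"
  assumes lim: "(\<lambda>k. c2norm \<Omega> (\<lambda>x. \<phi> k x - \<psi> x)) \<longlonglongrightarrow> 0"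
    and C1: "\<And>k. Ck_on 1 \<Omega> (\<phi> k)" "Ck_on 1 \<Omega> \<psi>"
  shows "uniform_limit \<Omega> \<phi> \<psi> sequentially"
    and "uniform_limit \<Omega> (\<lambda>k. divm (\<phi> k)) (divm \<psi>) sequentially"
proof -
  define N where "N = real CARD('n) ^ 2"
  have N: "1 \<le> N" unfolding N_def by simp
  have small: "\<forall>\<^sub>F k in sequentially. \<forall>x\<in>\<Omega>.
      norm (\<phi> k x - \<psi> x) \<le> t \<and> norm (divm (\<phi> k) x - divm \<psi> x) \<le> N * t" if t: "t > 0" for t
    using order_tendstoD(2)[OF lim, of "ennreal t"] t
  proof (simp, elim eventually_mono, intro ballI)
    fix k x assume "c2norm \<Omega> (\<lambda>x. \<phi> k x - \<psi> x) < ennreal t" and x: "x \<in> \<Omega>"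
    then have le: "c2norm \<Omega> (\<lambda>x. \<phi> k x - \<psi> x) \<le> ennreal t" by simp
    have "norm (pd j (\<lambda>x. \<phi> k x - \<psi> x) x) \<le> t" for j
      using norm_pdm_le_of_c2norm_le[OF le _ _ x, of "{#j#}"] t by simp
    then have "norm (divm (\<lambda>x. \<phi> k x - \<psi> x) x) \<le> N * t"
      unfolding N_def by (rule norm_divm_le)
    then show "norm (\<phi> k x - \<psi> x) \<le> t \<and> norm (divm (\<phi> k) x - divm \<psi> x) \<le> N * t"
      using norm_pdm_le_of_c2norm_le[OF le _ _ x, of "{#}"] t divm_diff[OF C1 x] by simp
  qed
  show "uniform_limit \<Omega> \<phi> \<psi> sequentially"
  proof (rule uniform_limitI)
    fix e :: real assume "e > 0"
    with small[of "e / 2"] show "\<forall>\<^sub>F k in sequentially. \<forall>x\<in>\<Omega>. dist (\<phi> k x) (\<psi> x) < e"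
      by (auto simp: dist_norm elim!: eventually_mono)
  qed
  show "uniform_limit \<Omega> (\<lambda>k. divm (\<phi> k)) (divm \<psi>) sequentially"
  proof (rule uniform_limitI)
    fix e :: real assume e: "e > 0"
    have "N * (e / (2 * N)) < e" using N e by simp
    with small[of "e / (2 * N)"] e N
    show "\<forall>\<^sub>F k in sequentially. \<forall>x\<in>\<Omega>. dist (divm (\<phi> k) x) (divm \<psi> x) < e"
      by (auto simp: dist_norm elim!: eventually_mono)
  qed
qed

lemma uniform_limit_compose_continuous:
  fixes f :: "'i \<Rightarrow> 'a \<Rightarrow> 'b::{real_normed_vector, heine_borel}" and h :: "'b \<Rightarrow> 'c::metric_space"
  assumes lim: "uniform_limit S f g F" and "bounded (g ` S)" and "continuous_on UNIV h"
  shows "uniform_limit S (\<lambda>k x. h (f k x)) (\<lambda>x. h (g x)) F"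
proof -
  obtain R where R: "\<And>x. x \<in> S \<Longrightarrow> norm (g x) \<le> R"
    using assms(2) by (auto simp: bounded_iff)
  have "\<forall>\<^sub>F k in F. \<forall>x\<in>S. f k x \<in> cball 0 (R + 1)"
    using uniform_limitD[OF lim zero_less_one]
  proof (elim eventually_mono, intro ballI)
    fix k x assume "\<forall>x\<in>S. dist (f k x) (g x) < 1" "x \<in> S"
    then have "norm (f k x - g x) < 1" "norm (g x) \<le> R" using R by (auto simp: dist_norm)
    then show "f k x \<in> cball 0 (R + 1)"
      using norm_triangle_sub[of "f k x" "g x"] by simp
  qed
  moreover have "uniformly_continuous_on (cball 0 (R + 1)) h"
    by (rule compact_uniformly_continuous[OF continuous_on_subset[OF assms(3)]]) auto
  ultimately show ?thesis
    using uniform_limit_compose_uniformly_continuous_on[OF lim] by blast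
qed

definition admissible ::
    "ereal \<Rightarrow> (real^'n::finite \<Rightarrow> real) \<Rightarrow> (real^'n \<Rightarrow> real) \<Rightarrow> (real^'n) set \<Rightarrow>
     (real^'n \<Rightarrow> real^'n^'n) \<Rightarrow> bool" where
  "admissible r \<alpha>0 \<alpha>1 \<Omega> \<phi> \<longleftrightarrow> (\<forall>x\<in>\<Omega>. lr_mat r (\<phi> x) \<le> \<alpha>0 x \<and> lr_vec r (divm \<phi> x) \<le> \<alpha>1 x)"

lemma c2closure_admissible_subset:
  fixes \<Omega> :: "(real^'n::finite) set"
  assumes r: "1 \<le> r"
  shows "c2closure \<Omega> {\<phi>. Cc_inf \<Omega> \<phi> \<and> admissible r \<alpha>0 \<alpha>1 \<Omega> \<phi>}
           \<subseteq> {\<psi>. C02 \<Omega> \<psi> \<and> admissible r \<alpha>0 \<alpha>1 \<Omega> \<psi>}"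
proof
  fix \<psi> assume "\<psi> \<in> c2closure \<Omega> {\<phi>. Cc_inf \<Omega> \<phi> \<and> admissible r \<alpha>0 \<alpha>1 \<Omega> \<phi>}"
  then obtain \<phi> where C: "C02 \<Omega> \<psi>"
    and \<phi>: "\<And>k. Cc_inf \<Omega> (\<phi> k)" "\<And>k. admissible r \<alpha>0 \<alpha>1 \<Omega> (\<phi> k)"
    and lim: "(\<lambda>k. c2norm \<Omega> (\<lambda>x. \<phi> k x - \<psi> x)) \<longlonglongrightarrow> 0"
    unfolding c2closure_def by auto
  have C1: "Ck_on 1 \<Omega> \<psi>" using C unfolding C02_def by (auto elim: Ck_on_mono)
  note unif = c2norm_tendsto_imp_uniform_limit[OF lim Cc_inf_Ck_on[OF \<phi>(1)] C1]
  have "lr_mat r (\<psi> x) \<le> \<alpha>0 x \<and> lr_vec r (divm \<psi> x) \<le> \<alpha>1 x" if x: "x \<in> \<Omega>" for x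
  proof
    have "isCont (lr_mat r) (\<psi> x)" "isCont (lr_vec r) (divm \<psi> x)"
      using lr_mat_continuous[OF r] lr_vec_continuous[OF r] continuous_on_eq_continuous_at[OF open_UNIV]
      by blast+
    then have "(\<lambda>k. lr_mat r (\<phi> k x)) \<longlonglongrightarrow> lr_mat r (\<psi> x)"
      and "(\<lambda>k. lr_vec r (divm (\<phi> k) x)) \<longlonglongrightarrow> lr_vec r (divm \<psi> x)"
      using unif[THEN tendsto_uniform_limitI, OF x] by (auto intro: isCont_tendsto_compose)
    then show "lr_mat r (\<psi> x) \<le> \<alpha>0 x" "lr_vec r (divm \<psi> x) \<le> \<alpha>1 x"
      using \<phi>(2) x unfolding admissible_def by (auto intro: LIMSEQ_le_const2)
  qed
  with C show "\<psi> \<in> {\<psi>. C02 \<Omega> \<psi> \<and> admissible r \<alpha>0 \<alpha>1 \<Omega> \<psi>}"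
    unfolding admissible_def by simp
qed

lemma shrink_le_weight:
  fixes v a l e :: real
  assumes "0 \<le> e" "e \<le> 1" "0 \<le> l" "l \<le> a" "v \<le> a + e * l"
  shows "(1 - e) * v \<le> a"
proof -
  have "(1 - e) * v \<le> (1 - e) * (a + e * l)" using assms by (simp add: mult_left_mono)
  also have "\<dots> = a - e * (a - l) - e * e * l" by (simp add: algebra_simps)
  also have "\<dots> \<le> a"
  proof -
    have "0 \<le> e * (a - l)" "0 \<le> e * e * l" using assms by simp_all
    then show ?thesis by linarith
  qed
  finally show ?thesis .
qed

lemma eventually_shrunk_admissible:
  fixes \<phi> :: "nat \<Rightarrow> real^'n::finite \<Rightarrow> real^'n^'n"
  assumes r: "1 \<le> r" and e: "0 < e" "e \<le> 1"
    and low: "0 < \<alpha>_low" "\<forall>x\<in>\<Omega>. \<alpha>0 x > \<alpha>_low \<and> \<alpha>1 x > \<alpha>_low"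
    and adm: "admissible r \<alpha>0 \<alpha>1 \<Omega> \<psi>" and C1: "\<And>k. Ck_on 1 \<Omega> (\<phi> k)"
    and lim0: "uniform_limit \<Omega> \<phi> \<psi> sequentially" "bounded (\<psi> ` \<Omega>)"
    and lim1: "uniform_limit \<Omega> (\<lambda>k. divm (\<phi> k)) (divm \<psi>) sequentially" "bounded (divm \<psi> ` \<Omega>)"
  shows "\<forall>\<^sub>F k in sequentially. admissible r \<alpha>0 \<alpha>1 \<Omega> (\<lambda>y. (1 - e) *\<^sub>R \<phi> k y)"
proof -
  have eta: "0 < e * \<alpha>_low" using e low(1) by simp
  have "uniform_limit \<Omega> (\<lambda>k x. lr_mat r (\<phi> k x)) (\<lambda>x. lr_mat r (\<psi> x)) sequentially"
    by (rule uniform_limit_compose_continuous[OF lim0 lr_mat_continuous[OF r]])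
  moreover have "uniform_limit \<Omega> (\<lambda>k x. lr_vec r (divm (\<phi> k) x)) (\<lambda>x. lr_vec r (divm \<psi> x)) sequentially"
    by (rule uniform_limit_compose_continuous[OF lim1 lr_vec_continuous[OF r]])
  ultimately have "\<forall>\<^sub>F k in sequentially.
      (\<forall>x\<in>\<Omega>. dist (lr_mat r (\<phi> k x)) (lr_mat r (\<psi> x)) < e * \<alpha>_low) \<and>
      (\<forall>x\<in>\<Omega>. dist (lr_vec r (divm (\<phi> k) x)) (lr_vec r (divm \<psi> x)) < e * \<alpha>_low)"
    by (intro eventually_conj uniform_limitD eta)
  then show ?thesis
  proof (elim eventually_mono)
    fix k assume close:
      "(\<forall>x\<in>\<Omega>. dist (lr_mat r (\<phi> k x)) (lr_mat r (\<psi> x)) < e * \<alpha>_low) \<and>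
       (\<forall>x\<in>\<Omega>. dist (lr_vec r (divm (\<phi> k) x)) (lr_vec r (divm \<psi> x)) < e * \<alpha>_low)"
    have "lr_mat r ((1 - e) *\<^sub>R \<phi> k x) \<le> \<alpha>0 x \<and> lr_vec r (divm (\<lambda>y. (1 - e) *\<^sub>R \<phi> k y) x) \<le> \<alpha>1 x"
      if x: "x \<in> \<Omega>" for x
    proof -
      have "dist (lr_mat r (\<phi> k x)) (lr_mat r (\<psi> x)) < e * \<alpha>_low"
        "dist (lr_vec r (divm (\<phi> k) x)) (lr_vec r (divm \<psi> x)) < e * \<alpha>_low"
        using close x by blast+
      moreover have "lr_mat r (\<psi> x) \<le> \<alpha>0 x" "lr_vec r (divm \<psi> x) \<le> \<alpha>1 x"
        using adm x unfolding admissible_def by blast+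
      ultimately have "lr_mat r (\<phi> k x) \<le> \<alpha>0 x + e * \<alpha>_low"
        "lr_vec r (divm (\<phi> k) x) \<le> \<alpha>1 x + e * \<alpha>_low"
        by (auto simp: dist_real_def abs_less_iff)
      moreover have "\<alpha>_low \<le> \<alpha>0 x" "\<alpha>_low \<le> \<alpha>1 x" "0 \<le> 1 - e" using low x e by auto
      ultimately show ?thesis
        using shrink_le_weight[of e \<alpha>_low "\<alpha>0 x" "lr_mat r (\<phi> k x)"]
          shrink_le_weight[of e \<alpha>_low "\<alpha>1 x" "lr_vec r (divm (\<phi> k) x)"] low(1) e
        by (simp add: lr_mat_scaleR[OF r] lr_vec_scaleR[OF r] divm_scaleR[OF C1 x])
    qed
    then show "admissible r \<alpha>0 \<alpha>1 \<Omega> (\<lambda>y. (1 - e) *\<^sub>R \<phi> k y)"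
      unfolding admissible_def by blast
  qed
qed

lemma c2closure_if_approximable:
  assumes "C02 \<Omega> \<psi>"
    and approx: "\<And>\<epsilon>. \<epsilon> > 0 \<Longrightarrow> \<exists>\<phi>\<in>S. c2norm \<Omega> (\<lambda>x. \<phi> x - \<psi> x) \<le> ennreal \<epsilon>"
  shows "\<psi> \<in> c2closure \<Omega> S"
proof -
  obtain \<phi> where \<phi>: "\<And>m. \<phi> m \<in> S"
    and close: "\<And>m. c2norm \<Omega> (\<lambda>x. \<phi> m x - \<psi> x) \<le> ennreal (inverse (real (Suc m)))"
    using approx[of "inverse (real (Suc m))" for m] by (metis of_nat_0_less_iff positive_imp_inverse_positive zero_less_Suc)
  have "(\<lambda>m. ennreal (inverse (real (Suc m)))) \<longlonglongrightarrow> ennreal 0"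
    by (rule tendsto_ennrealI[OF LIMSEQ_inverse_real_of_nat])
  then have inverse_lim: "(\<lambda>m. ennreal (inverse (real (Suc m)))) \<longlonglongrightarrow> 0" by simp
  have "(\<lambda>m. c2norm \<Omega> (\<lambda>x. \<phi> m x - \<psi> x)) \<longlonglongrightarrow> 0"
    by (rule tendsto_sandwich[OF _ _ tendsto_const inverse_lim]) (simp_all add: close del: of_nat_Suc)
  with assms(1) \<phi> show ?thesis unfolding c2closure_def by blast
qed

lemma admissible_subset_c2closure:
  fixes \<Omega> :: "(real^'n::finite) set"
  assumes op: "open \<Omega>" and r: "1 \<le> r"
    and low: "0 < \<alpha>_low" "\<forall>x\<in>\<Omega>. \<alpha>0 x > \<alpha>_low \<and> \<alpha>1 x > \<alpha>_low"
  shows "{\<psi>. C02 \<Omega> \<psi> \<and> admissible r \<alpha>0 \<alpha>1 \<Omega> \<psi>}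
           \<subseteq> c2closure \<Omega> {\<phi>. Cc_inf \<Omega> \<phi> \<and> admissible r \<alpha>0 \<alpha>1 \<Omega> \<phi>}"
proof
  fix \<psi> assume "\<psi> \<in> {\<psi>. C02 \<Omega> \<psi> \<and> admissible r \<alpha>0 \<alpha>1 \<Omega> \<psi>}"
  then have C: "C02 \<Omega> \<psi>" and adm: "admissible r \<alpha>0 \<alpha>1 \<Omega> \<psi>" by auto
  obtain \<phi> where \<phi>: "\<And>k. Cc_inf \<Omega> (\<phi> k)" and lim: "(\<lambda>k. c2norm \<Omega> (\<lambda>x. \<phi> k x - \<psi> x)) \<longlonglongrightarrow> 0"
    using C unfolding C02_def by auto
  have \<psi>2: "Ck_on 2 \<Omega> \<psi>" using C unfolding C02_def by simp
  note unif = c2norm_tendsto_imp_uniform_limit[OF lim Cc_inf_Ck_on[OF \<phi>] Ck_on_mono[OF \<psi>2]]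
  obtain B where B: "c2norm \<Omega> \<psi> = ennreal B" "0 \<le> B"
    using C02_c2norm_finite[OF op C] less_top_ennreal by blast
  have "norm (\<psi> x) \<le> B" "norm (divm \<psi> x) \<le> real CARD('n) ^ 2 * B" if x: "x \<in> \<Omega>" for x
  proof -
    show "norm (\<psi> x) \<le> B"
      using norm_pdm_le_of_c2norm_le[of \<Omega> \<psi> B "{#}" x] B x by simp
    have "norm (pd j \<psi> x) \<le> B" for j
      using norm_pdm_le_of_c2norm_le[of \<Omega> \<psi> B "{#j#}" x] B x by simp
    then show "norm (divm \<psi> x) \<le> real CARD('n) ^ 2 * B"
      by (rule norm_divm_le)
  qed
  then have bnd: "bounded (\<psi> ` \<Omega>)" "bounded (divm \<psi> ` \<Omega>)"
    unfolding bounded_iff by blast+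
  show "\<psi> \<in> c2closure \<Omega> {\<phi>. Cc_inf \<Omega> \<phi> \<and> admissible r \<alpha>0 \<alpha>1 \<Omega> \<phi>}"
  proof (rule c2closure_if_approximable[OF C])
    fix \<epsilon> :: real assume \<epsilon>: "\<epsilon> > 0"
    define e where "e = min (1 / 2) (\<epsilon> / (2 * (B + 1)))"
    have e: "0 < e" "e < 1" "e * B \<le> \<epsilon> / 2"
    proof -
      show "0 < e" "e < 1" unfolding e_def using \<epsilon> B(2) by auto
      have "e * B \<le> \<epsilon> / (2 * (B + 1)) * (B + 1)"
        unfolding e_def using B(2) \<epsilon> by (intro mult_mono) auto
      also have "\<dots> = \<epsilon> / 2" using B(2) by (simp add: field_simps)
      finally show "e * B \<le> \<epsilon> / 2" .
    qed
    have "\<forall>\<^sub>F k in sequentially. admissible r \<alpha>0 \<alpha>1 \<Omega> (\<lambda>y. (1 - e) *\<^sub>R \<phi> k y) \<and>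
        c2norm \<Omega> (\<lambda>x. \<phi> k x - \<psi> x) < ennreal (\<epsilon> / 2)"
      using eventually_shrunk_admissible[OF r _ _ low adm Cc_inf_Ck_on[OF \<phi>] unif(1) bnd(1) unif(2) bnd(2)]
        order_tendstoD(2)[OF lim, of "ennreal (\<epsilon> / 2)"] e \<epsilon>
      by (intro eventually_conj) auto
    then obtain k where k: "admissible r \<alpha>0 \<alpha>1 \<Omega> (\<lambda>y. (1 - e) *\<^sub>R \<phi> k y)"
      "c2norm \<Omega> (\<lambda>x. \<phi> k x - \<psi> x) \<le> ennreal (\<epsilon> / 2)"
      by (auto simp: eventually_sequentially less_imp_le)
    have "c2norm \<Omega> (\<lambda>x. (1 - e) *\<^sub>R \<phi> k x - \<psi> x)
        \<le> c2norm \<Omega> (\<lambda>x. \<phi> k x - \<psi> x) + ennreal e * c2norm \<Omega> \<psi>"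
      using c2norm_shrink_diff_le[OF op Cc_inf_Ck_on[OF \<phi>] \<psi>2, of e] e by simp
    also have "\<dots> \<le> ennreal (\<epsilon> / 2) + ennreal e * ennreal B"
      using k(2) B(1) by (simp add: add_right_mono)
    also have "\<dots> \<le> ennreal \<epsilon>"
      using e \<epsilon> B(2) by (simp flip: ennreal_mult ennreal_plus add: ennreal_leI)
    finally show "\<exists>\<phi>\<in>{\<phi>. Cc_inf \<Omega> \<phi> \<and> admissible r \<alpha>0 \<alpha>1 \<Omega> \<phi>}.
        c2norm \<Omega> (\<lambda>x. \<phi> x - \<psi> x) \<le> ennreal \<epsilon>"
      using k(1) Cc_inf_scaleR[OF op \<phi>, of "1 - e"] e by auto
  qed
qed

theorem mainTheorem2:
  fixes \<Omega> :: "(real^'n::finite) set"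
    and \<alpha>0 \<alpha>1 :: "real^'n \<Rightarrow> real"
    and r :: ereal and \<alpha>_low :: real
  assumes "CARD('n) \<ge> 2"
    and "open \<Omega>" and "bounded \<Omega>" and "lipschitz_boundary \<Omega>"
    and "1 \<le> r"
    and "continuous_on (closure \<Omega>) \<alpha>0" and "continuous_on (closure \<Omega>) \<alpha>1"
    and "\<alpha>_low > 0" and "\<forall>x\<in>\<Omega>. \<alpha>0 x > \<alpha>_low \<and> \<alpha>1 x > \<alpha>_low"
  shows "c2closure \<Omega> {\<phi>. Cc_inf \<Omega> \<phi> \<and>
            (\<forall>x\<in>\<Omega>. lr_mat r (\<phi> x) \<le> \<alpha>0 x \<and> lr_vec r (divm \<phi> x) \<le> \<alpha>1 x)}
       = {\<psi>. C02 \<Omega> \<psi> \<and>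
            (\<forall>x\<in>\<Omega>. lr_mat r (\<psi> x) \<le> \<alpha>0 x \<and> lr_vec r (divm \<psi> x) \<le> \<alpha>1 x)}"
  using c2closure_admissible_subset[OF assms(5), of \<Omega> \<alpha>0 \<alpha>1]
    admissible_subset_c2closure[OF assms(2,5,8,9)]
  unfolding admissible_def by (rule equalityI)

end
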